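(* The sequence $(m_n)_{n\ge1}$ is strictly increasing. Consequently, if $T_1$ and $T_2$ are minimal trees, then $I(T_1)<I(T_2)$ if and only if $|T_1|<|T_2|$.
   Context: A rooted tree $T$ is a finite tree with a distinguished vertex, its root; its order $|T|$ is its number of vertices. For vertices $u,v$, the infimum of $u$ and $v$ is the vertex common to the path from $u$ to the root and the path from $v$ to the root that is furthest from the root. A set $X\subseteq V(T)$ is infima closed if the infimum of any two elements of $X$ lies in $X$. $I(T)$ denotes the number of nonempty infima closed subsets of $V(T)$. For $n\ge1$, $m_n=\min\{I(T): T \text{ a rooted tree with } n \text{ vertices}\}$; a rooted tree $T$ with $I(T)=m_{|T|}$ is called minimal. *)

theory Defs
  imports Main "HOL-Library.Sublist"
begin

text \<open>Vertices are addressed by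
  their position: the root is the empty list, and i # p is vertex p of the i-th subtree.
  The path from a vertex p to the root consists of the prefixes of p.\<close>

datatype rtree = Node "rtree list"

inductive is_vert :: "rtree \<Rightarrow> nat list \<Rightarrow> bool" where
  root: "is_vert t []"
| child: "i < length ts \<Longrightarrow> is_vert (ts ! i) p \<Longrightarrow> is_vert (Node ts) (i # p)"

definition verts :: "rtree \<Rightarrow> nat list set" where
  "verts t = {p. is_vert t p}"

definition order :: "rtree \<Rightarrow> nat" where
  "order t = card (verts t)"

text \<open>Infimum of two vertices: the common ancestor furthest from the root, i.e. the longest
  common prefix of their positions.\<close>
definition vinf :: "nat list \<Rightarrow> nat list \<Rightarrow> nat list" where
  "vinf u v = longest_common_prefix u v"

definition infima_closed :: "rtree \<Rightarrow> nat list set \<Rightarrow> bool" where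
  "infima_closed t X \<longleftrightarrow> X \<subseteq> verts t \<and> (\<forall>u\<in>X. \<forall>v\<in>X. vinf u v \<in> X)"

definition I :: "rtree \<Rightarrow> nat" where
  "I t = card {X. X \<noteq> {} \<and> infima_closed t X}"

definition m :: "nat \<Rightarrow> nat" where
  "m n = (INF t \<in> {t. order t = n}. I t)"

definition minimal :: "rtree \<Rightarrow> bool" where
  "minimal t \<longleftrightarrow> I t = m (order t)"

end

theory Submission
  imports Defs
begin

text \<open>Deleting a leaf from a tree of order n+1 gives a tree of order n that has strictly
  fewer nonempty infima closed sets: every infima closed set of the smaller tree is one of
  the larger tree, while the singleton of the deleted leaf is not. Applied to a minimal tree
  of order n+1 this gives m n < m (n+1).\<close>

lemma is_vert_Node:
  "is_vert (Node ts) p \<longleftrightarrow> p = [] \<or> (\<exists>i q. p = i # q \<and> i < length ts \<and> is_vert (ts ! i) q)"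
  by (auto elim: is_vert.cases intro: is_vert.intros)

lemma verts_Node:
  "verts (Node ts) = insert [] (\<Union>i<length ts. Cons i ` verts (ts ! i))"
  unfolding verts_def by (auto simp: is_vert_Node) (metis imageI lessThan_iff mem_Collect_eq)

lemma verts_Node_Nil [simp]: "verts (Node []) = {[]}"
  by (simp add: verts_Node)

lemma verts_Node_snoc:
  "verts (Node (ts @ [t])) = verts (Node ts) \<union> Cons (length ts) ` verts t"
  unfolding verts_def by (auto simp: is_vert_Node nth_append less_Suc_eq) blast

lemma Cons_length_notin_verts: "length ts # q \<notin> verts (Node ts)"
  by (simp add: verts_def is_vert_Node)

lemma finite_verts: "finite (verts t)"
  by (induction t) (auto simp: verts_Node)

lemma Nil_in_verts: "[] \<in> verts t"
  by (simp add: verts_def is_vert.root)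

lemma size_last_less: "ts \<noteq> [] \<Longrightarrow> size (last ts) < Suc (size_list size ts)"
  using size_list_estimation'[OF last_in_set order_refl, of ts size] by simp

function last_leaf :: "rtree \<Rightarrow> nat list" where
  "last_leaf (Node ts) = (if ts = [] then [] else (length ts - 1) # last_leaf (last ts))"
  by pat_completeness auto
termination by (relation "measure size") (auto simp: size_last_less)

function prune_last_leaf :: "rtree \<Rightarrow> rtree" where
  "prune_last_leaf (Node ts) =
    (if ts = [] then Node []
     else if last ts = Node [] then Node (butlast ts)
     else Node (butlast ts @ [prune_last_leaf (last ts)]))"
  by pat_completeness auto
termination by (relation "measure size") (auto simp: size_last_less)

declare last_leaf.simps [simp del] prune_last_leaf.simps [simp del]

lemma last_leaf_Leaf [simp]: "last_leaf (Node []) = []"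
  by (simp add: last_leaf.simps)

lemma last_leaf_snoc [simp]: "last_leaf (Node (ts @ [t])) = length ts # last_leaf t"
  by (simp add: last_leaf.simps)

lemma prune_last_leaf_snoc [simp]:
  "prune_last_leaf (Node (ts @ [t])) =
    (if t = Node [] then Node ts else Node (ts @ [prune_last_leaf t]))"
  by (simp add: prune_last_leaf.simps)

lemma last_leaf_in_verts: "last_leaf t \<in> verts t"
proof (induction t rule: last_leaf.induct)
  case (1 ts)
  then show ?case
    by (cases ts rule: rev_cases) (simp_all add: verts_Node_snoc Nil_in_verts)
qed

lemma verts_prune_last_leaf:
  "t \<noteq> Node [] \<Longrightarrow> verts (prune_last_leaf t) = verts t - {last_leaf t}"
proof (induction t rule: prune_last_leaf.induct)
  case (1 ts)
  then obtain us u where ts: "ts = us @ [u]"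
    by (cases ts rule: rev_cases) auto
  let ?k = "length us"
  have new: "?k # q \<notin> verts (Node us)" for q
    by (rule Cons_length_notin_verts)
  show ?case
  proof (cases "u = Node []")
    case True
    then show ?thesis
      using new[of "[]"] by (auto simp: ts verts_Node_snoc)
  next
    case False
    then have "verts (prune_last_leaf u) = verts u - {last_leaf u}"
      using 1 ts by simp
    then have "Cons ?k ` verts (prune_last_leaf u) = Cons ?k ` verts u - {?k # last_leaf u}"
      by (simp add: image_set_diff)
    then show ?thesis
      using False new by (auto simp: ts verts_Node_snoc)
  qed
qed

lemma order_prune_last_leaf: "t \<noteq> Node [] \<Longrightarrow> order (prune_last_leaf t) = order t - 1"
  by (simp add: order_def verts_prune_last_leaf last_leaf_in_verts finite_verts)

lemma finite_infima_closed: "finite {X. infima_closed t X}"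
  by (rule finite_subset[of _ "Pow (verts t)"]) (auto simp: infima_closed_def finite_verts)

lemma vinf_self: "vinf v v = v"
  unfolding vinf_def by (induction v) auto

lemma infima_closed_singleton: "v \<in> verts t \<Longrightarrow> infima_closed t {v}"
  by (simp add: infima_closed_def vinf_self)

lemma I_prune_last_leaf_less: "t \<noteq> Node [] \<Longrightarrow> I (prune_last_leaf t) < I t"
proof -
  assume "t \<noteq> Node []"
  then have verts: "verts (prune_last_leaf t) = verts t - {last_leaf t}"
    by (rule verts_prune_last_leaf)
  let ?S = "{X. X \<noteq> {} \<and> infima_closed t X}"
  let ?S' = "{X. X \<noteq> {} \<and> infima_closed (prune_last_leaf t) X}"
  have "?S' \<subseteq> ?S"
    using verts by (auto simp: infima_closed_def)
  moreover have "{last_leaf t} \<in> ?S"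
    by (simp add: infima_closed_singleton last_leaf_in_verts)
  moreover have "{last_leaf t} \<notin> ?S'"
    using verts by (simp add: infima_closed_def)
  ultimately have "?S' \<subset> ?S"
    by blast
  moreover have "finite ?S"
    using finite_infima_closed[of t] by (rule rev_finite_subset) blast
  ultimately show ?thesis
    unfolding I_def by (simp add: psubset_card_mono)
qed

fun path_tree :: "nat \<Rightarrow> rtree" where
  "path_tree 0 = Node []"
| "path_tree (Suc k) = Node [path_tree k]"

lemma order_path_tree: "order (path_tree k) = Suc k"
proof (induction k)
  case 0
  then show ?case by (simp add: order_def)
next
  case (Suc k)
  have "verts (path_tree (Suc k)) = insert [] (Cons 0 ` verts (path_tree k))"
    using verts_Node_snoc[of "[]" "path_tree k"] by (auto simp: verts_Node)
  then show ?case
    using Suc by (auto simp: order_def card_insert_if finite_verts card_image)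
qed

lemma order_ge_1: "order t \<ge> 1"
  unfolding order_def using finite_verts Nil_in_verts
  by (metis One_nat_def Suc_leI card_gt_0_iff empty_iff)

lemma m_attained: "n \<ge> 1 \<Longrightarrow> \<exists>t. order t = n \<and> I t = m n"
proof -
  assume "n \<ge> 1"
  then have "order (path_tree (n - 1)) = n"
    by (simp add: order_path_tree)
  then have "I ` {t. order t = n} \<noteq> {}" by blast
  then have "m n \<in> I ` {t. order t = n}"
    unfolding m_def by (rule Inf_nat_def1)
  then show ?thesis by auto
qed

lemma m_le_I: "m (order t) \<le> I t"
  unfolding m_def by (rule cINF_lower) auto

lemma m_less_m_Suc: "n \<ge> 1 \<Longrightarrow> m n < m (Suc n)"
proof -
  assume "n \<ge> 1"
  then obtain t where t: "order t = Suc n" "I t = m (Suc n)"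
    using m_attained[of "Suc n"] by auto
  with \<open>n \<ge> 1\<close> have "t \<noteq> Node []"
    by (auto simp: order_def)
  have "m n \<le> I (prune_last_leaf t)"
    using m_le_I[of "prune_last_leaf t"] order_prune_last_leaf[OF \<open>t \<noteq> Node []\<close>] t(1)
    by simp
  also have "\<dots> < I t"
    using \<open>t \<noteq> Node []\<close> by (rule I_prune_last_leaf_less)
  finally show ?thesis
    using t(2) by simp
qed

lemma m_less_iff: "a \<ge> 1 \<Longrightarrow> b \<ge> 1 \<Longrightarrow> m a < m b \<longleftrightarrow> a < b"
proof -
  have mono: "strict_mono (\<lambda>k. m (Suc k))"
    unfolding strict_mono_Suc_iff by (simp add: m_less_m_Suc)
  assume "a \<ge> 1" "b \<ge> 1"
  then obtain a' b' where "a = Suc a'" "b = Suc b'"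
    using Suc_le_D[of 0 a] Suc_le_D[of 0 b] by auto
  then show ?thesis
    using strict_mono_less[OF mono, of a' b'] by simp
qed

theorem lemma2p2:
  shows "(\<forall>n\<ge>1. m n < m (Suc n)) \<and>
    (\<forall>T1 T2. minimal T1 \<and> minimal T2 \<longrightarrow> (I T1 < I T2 \<longleftrightarrow> order T1 < order T2))"
proof (intro conjI allI impI)
  fix T1 T2
  assume "minimal T1 \<and> minimal T2"
  then have "I T1 = m (order T1)" "I T2 = m (order T2)"
    by (simp_all add: minimal_def)
  then show "I T1 < I T2 \<longleftrightarrow> order T1 < order T2"
    using m_less_iff[OF order_ge_1 order_ge_1] by simp
qed (rule m_less_m_Suc)

end
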